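(* Let $m\geq3$ be an integer. Then $$\int_0^\infty\left(\sqrt{1+t^m}-t^{\frac m2}\right)dt=\frac{\sqrt\pi}{2\cos\left(\frac\pi m\right)}\,\frac{\Gamma\left(1+\frac1m\right)}{\Gamma\left(\frac32+\frac1m\right)}.$$ *)

theory Defs
  imports "HOL-Analysis.Analysis"
begin

end

theory Submission
  imports Defs "HOL-Real_Asymp.Real_Asymp"
begin

(* With s = 1/m, substituting t = y powr (2 s) and then y = x / (2 sqrt (1 - x)), which solves
   sqrt (1 + y^2) - y = sqrt (1 - x), maps (0,1) onto (0,oo) and turns the integral into
   s 2^(-2 s) (2 B(2 s, 3/2 - s) + B(2 s + 1, 1/2 - s)); the second Beta integral converges
   exactly when s < 1/2.  Legendre's duplication formula and Euler's reflection formula then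
   reduce this combination of Beta values to the closed form. *)

lemma Gamma_reflection_real:
  fixes z :: real
  shows "Gamma z * Gamma (1 - z) = pi / sin (pi * z)"
proof -
  have "complex_of_real (Gamma z * Gamma (1 - z)) = Gamma (of_real z) * Gamma (1 - of_real z)"
    by (simp flip: Gamma_complex_of_real)
  also have "\<dots> = complex_of_real (pi / sin (pi * z))"
    by (simp add: Gamma_reflection_complex flip: sin_of_real)
  finally show ?thesis
    by (simp only: of_real_eq_iff)
qed

lemma Gamma_legendre_duplication_real:
  fixes z :: real
  assumes "z > 0"
  shows "Gamma z * Gamma (z + 1/2) = 2 powr (1 - 2 * z) * sqrt pi * Gamma (2 * z)"
proof -
  have not_nonpos: "complex_of_real y \<notin> \<int>\<^sub>\<le>\<^sub>0" if "y > 0" for y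
    using that by (auto simp: of_real_in_nonpos_Ints_iff elim!: nonpos_Ints_cases)
  have "complex_of_real (Gamma z * Gamma (z + 1/2)) = Gamma (of_real z) * Gamma (of_real z + 1/2)"
    by (simp flip: Gamma_complex_of_real)
  also have "\<dots> = exp ((1 - 2 * of_real z) * of_real (ln 2)) * of_real (sqrt pi) * Gamma (2 * of_real z)"
    using not_nonpos[of z] not_nonpos[of "z + 1/2"] assms
    by (intro Gamma_legendre_duplication) simp_all
  also have "\<dots> = complex_of_real (2 powr (1 - 2 * z) * sqrt pi * Gamma (2 * z))"
    by (simp add: powr_def flip: exp_of_real Gamma_complex_of_real)
  finally show ?thesis
    by (simp only: of_real_eq_iff)
qed

lemma Beta_combination_eq:
  fixes s :: real
  assumes "0 < s" "s < 1/2"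
  shows "s * 2 powr (-2 * s) * (2 * Beta (2 * s) (3/2 - s) + Beta (2 * s + 1) (1/2 - s))
           = sqrt pi / (2 * cos (pi * s)) * (Gamma (1 + s) / Gamma (3/2 + s))"
proof -
  have Gamma_shift: "Gamma (y + 1) = y * Gamma y" if "y > 0" for y :: real
    using that by (simp add: Gamma_plus1 nonpos_Ints_def)
  have duplication: "2 powr (-2 * s) * Gamma (2 * s) = Gamma s * Gamma (1/2 + s) / (2 * sqrt pi)"
    using Gamma_legendre_duplication_real[OF \<open>0 < s\<close>]
    by (simp add: powr_diff powr_minus field_simps add.commute)
  have reflection: "Gamma (1/2 + s) * Gamma (1/2 - s) = pi / cos (pi * s)"
    using Gamma_reflection_real[of "1/2 + s"] by (simp add: distrib_left sin_add)
  have Gamma_pos: "Gamma (3/2 + s) > 0"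
    using assms by simp
  have cos_pos: "cos (pi * s) > 0"
    using assms pi_gt_zero by (intro cos_gt_zero_pi) (auto intro: less_trans[of _ 0])
  have "Beta (2 * s) (3/2 - s) = Gamma (2 * s) * Gamma (3/2 - s) / Gamma (3/2 + s)"
       "Beta (2 * s + 1) (1/2 - s) = Gamma (2 * s + 1) * Gamma (1/2 - s) / Gamma (3/2 + s)"
    by (simp_all add: Beta_def algebra_simps)
  then have "2 * Beta (2 * s) (3/2 - s) + Beta (2 * s + 1) (1/2 - s)
               = (2 * Gamma (3/2 - s) + 2 * s * Gamma (1/2 - s)) * Gamma (2 * s) / Gamma (3/2 + s)"
    using Gamma_shift[of "2 * s"] assms by (simp add: add_divide_distrib ring_distribs mult_ac)
  also have "\<dots> = Gamma (2 * s) * Gamma (1/2 - s) / Gamma (3/2 + s)"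
    using Gamma_shift[of "1/2 - s"] assms Gamma_pos by (simp add: field_simps)
  finally have "s * 2 powr (-2 * s) * (2 * Beta (2 * s) (3/2 - s) + Beta (2 * s + 1) (1/2 - s))
                  = s * (2 powr (-2 * s) * Gamma (2 * s)) * Gamma (1/2 - s) / Gamma (3/2 + s)"
    by simp
  also have "\<dots> = s * Gamma s * (Gamma (1/2 + s) * Gamma (1/2 - s)) / (2 * sqrt pi * Gamma (3/2 + s))"
    unfolding duplication by simp
  also have "\<dots> = Gamma (1 + s) * (pi / cos (pi * s)) / (2 * sqrt pi * Gamma (3/2 + s))"
    using Gamma_shift[of s] assms by (simp only: reflection add.commute[of 1 s])
  also have "\<dots> = sqrt pi / (2 * cos (pi * s)) * (Gamma (1 + s) / Gamma (3/2 + s))"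
  proof -
    have "Gamma (1 + s) * (r * r / cos (pi * s)) / (2 * r * Gamma (3/2 + s))
            = r / (2 * cos (pi * s)) * (Gamma (1 + s) / Gamma (3/2 + s))" if "r > 0" for r
      using that Gamma_pos cos_pos by (simp add: field_simps)
    from this[of "sqrt pi"] show ?thesis
      by simp
  qed
  finally show ?thesis .
qed

lemma has_integral_Beta_combination:
  fixes s :: real
  assumes "0 < s" "s < 1/2"
  shows "((\<lambda>x. s * 2 powr (-2 * s) *
              (2 * (x powr (2 * s - 1) * (1 - x) powr (1/2 - s)) + x powr (2 * s) * (1 - x) powr (- s - 1/2)))
           has_integral sqrt pi / (2 * cos (pi * s)) * (Gamma (1 + s) / Gamma (3/2 + s))) {0<..<1}"
proof -
  have "((\<lambda>x. x powr (2 * s - 1) * (1 - x) powr (1/2 - s)) has_integral Beta (2 * s) (3/2 - s)) {0..1}"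
       "((\<lambda>x. x powr (2 * s) * (1 - x) powr (- s - 1/2)) has_integral Beta (2 * s + 1) (1/2 - s)) {0..1}"
    using has_integral_Beta_real[of "2 * s" "3/2 - s"] has_integral_Beta_real[of "2 * s + 1" "1/2 - s"] assms
    by (simp_all add: algebra_simps)
  then have "((\<lambda>x. s * 2 powr (-2 * s) *
              (2 * (x powr (2 * s - 1) * (1 - x) powr (1/2 - s)) + x powr (2 * s) * (1 - x) powr (- s - 1/2)))
           has_integral s * 2 powr (-2 * s) * (2 * Beta (2 * s) (3/2 - s) + Beta (2 * s + 1) (1/2 - s))) {0..1}"
    by (intro has_integral_mult_right has_integral_add has_integral_cmul)
  then show ?thesis
    unfolding Beta_combination_eq[OF assms] has_integral_Icc_iff_Ioo .
qed

lemma has_integral_Ioi_substitution_nonneg: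
  fixes f g g' :: "real \<Rightarrow> real" and a b c I :: real
  assumes "a < b"
    and deriv: "\<And>x. a < x \<Longrightarrow> x < b \<Longrightarrow> (g has_real_derivative g' x) (at x)"
    and cont_f: "\<And>x. a < x \<Longrightarrow> x < b \<Longrightarrow> isCont f (g x)"
    and cont_g': "\<And>x. a < x \<Longrightarrow> x < b \<Longrightarrow> isCont g' x"
    and f_nonneg: "\<And>x. a < x \<Longrightarrow> x < b \<Longrightarrow> 0 \<le> f (g x)"
    and g'_nonneg: "\<And>x. a \<le> x \<Longrightarrow> x \<le> b \<Longrightarrow> 0 \<le> g' x"
    and "(g \<longlongrightarrow> c) (at_right a)"
    and "filterlim g at_top (at_left b)"
    and integral: "((\<lambda>x. f (g x) * g' x) has_integral I) {a<..<b}"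
  shows "(f has_integral I) {c<..}"
proof -
  have einterval_ab: "einterval (ereal a) (ereal b) = {a<..<b}"
    and einterval_c: "einterval (ereal c) \<infinity> = {c<..}"
    by (auto simp: einterval_def)
  have "isCont (\<lambda>x. f (g x) * g' x) x" if "a < x" "x < b" for x
    using isCont_o2[OF DERIV_isCont[OF deriv[OF that]] cont_f[OF that]] cont_g'[OF that]
    by (rule isCont_mult)
  then have "continuous_on {a<..<b} (\<lambda>x. f (g x) * g' x)"
    by (intro continuous_at_imp_continuous_on) auto
  then have measurable: "(\<lambda>x. indicator {a<..<b} x *\<^sub>R (f (g x) * g' x)) \<in> borel_measurable lborel"
    unfolding measurable_lborel2 by (rule borel_measurable_continuous_on_indicator[rotated]) simp
  have "(\<lambda>x. f (g x) * g' x) absolutely_integrable_on {a<..<b}"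
    using integral f_nonneg g'_nonneg
    by (intro nonnegative_absolutely_integrable_1) (auto simp: has_integral_integrable)
  then have fg_integrable: "set_integrable lborel (einterval a b) (\<lambda>x. f (g x) * g' x)"
    using measurable unfolding einterval_ab absolutely_integrable_on_def set_integrable_def
    by (simp add: integrable_completion)
  then have "set_integrable lborel (einterval c \<infinity>) f \<and>
             (LBINT x=c..\<infinity>. f x) = (LBINT x=a..b. f (g x) * g' x)"
    using interval_integral_substitution_nonneg[of a b g g' f c \<infinity>] assms
    by (simp add: ereal_tendsto_simps)
  then have f_integrable: "set_integrable lborel (einterval c \<infinity>) f"
    and "(LBINT x=c..\<infinity>. f x) = (LBINT x=a..b. f (g x) * g' x)"
    by blast+
  then have "integral {c<..} f = integral {a<..<b} (\<lambda>x. f (g x) * g' x)"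
    using interval_integral_eq_integral'[of c \<infinity> f] interval_integral_eq_integral'[of a b]
          f_integrable fg_integrable \<open>a < b\<close>
    by (simp add: einterval_ab einterval_c)
  with f_integrable integral show ?thesis
    unfolding einterval_c
    by (metis integrable_integral integral_unique set_borel_integral_eq_integral(1))
qed

lemma sqrt_one_plus_power2_minus_eq:
  fixes x :: real
  assumes "x < 1"
  shows "sqrt (1 + (x / (2 * sqrt (1 - x)))\<^sup>2) - x / (2 * sqrt (1 - x)) = sqrt (1 - x)"
proof -
  have r: "sqrt (1 - x) > 0" "(sqrt (1 - x))\<^sup>2 = 1 - x"
    using assms by simp_all
  have "1 + (x / (2 * sqrt (1 - x)))\<^sup>2 = ((2 - x) / (2 * sqrt (1 - x)))\<^sup>2"
    using r by (simp add: power_divide field_simps) (simp add: power2_eq_square algebra_simps)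
  then have "sqrt (1 + (x / (2 * sqrt (1 - x)))\<^sup>2) = (2 - x) / (2 * sqrt (1 - x))"
    using assms r by simp
  also have "\<dots> = x / (2 * sqrt (1 - x)) + sqrt (1 - x)"
    using r by (simp add: field_simps)
  finally show ?thesis
    by simp
qed

lemma powr_sqrt_substitution:
  fixes x s :: real
  assumes "0 < x" "x < 1"
  shows "(x / (2 * sqrt (1 - x))) powr (2 * s - 1) = 2 powr (1 - 2 * s) * x powr (2 * s - 1) * (1 - x) powr (1/2 - s)"
  using assms by (simp add: powr_def ln_div ln_mult ln_sqrt exp_add[symmetric] field_simps)

lemma sqrt_substitution_integrand_eq:
  fixes x s :: real
  assumes "0 < x" "x < 1"
  shows "sqrt (1 - x) * (2 * s * (x / (2 * sqrt (1 - x))) powr (2 * s - 1) * ((2 - x) / (4 * (1 - x) * sqrt (1 - x))))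
           = s * 2 powr (-2 * s) *
              (2 * (x powr (2 * s - 1) * (1 - x) powr (1/2 - s)) + x powr (2 * s) * (1 - x) powr (- s - 1/2))"
proof -
  have "sqrt (1 - x) > 0"
    using assms by simp
  then have *: "sqrt (1 - x) * (2 * s * (T * P * A) * ((2 - x) / (4 * (1 - x) * sqrt (1 - x))))
                  = s * (T / 2) * (2 * (P * A) + P * x * (A / (1 - x)))" for P A T :: real
    using assms by (simp add: field_simps)
  have "2 powr (-2 * s) = 2 powr (1 - 2 * s) / 2"
    by (simp add: powr_diff powr_minus_divide)
  moreover have "x powr (2 * s) = x powr (2 * s - 1) * x"
    using assms by (simp add: powr_diff)
  moreover have "(1 - x) powr (- s - 1/2) = (1 - x) powr (1/2 - s) / (1 - x)"
    using powr_diff[of "1 - x" "1/2 - s" 1] assms by (simp add: algebra_simps)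
  ultimately show ?thesis
    by (simp only: powr_sqrt_substitution[OF assms] *)
qed

lemma has_real_derivative_sqrt_substitution:
  fixes x :: real
  assumes "x < 1"
  shows "((\<lambda>x. x / (2 * sqrt (1 - x))) has_real_derivative (2 - x) / (4 * (1 - x) * sqrt (1 - x))) (at x)"
proof -
  have "sqrt (1 - x) * sqrt (1 - x) = 1 - x" "sqrt (1 - x) > 0"
    using assms by simp_all
  then show ?thesis
    using assms by (auto intro!: derivative_eq_intros simp: field_simps)
qed

lemma has_integral_sqrt_one_plus_powr_minus_powr:
  fixes p :: real
  assumes "p > 2"
  shows "((\<lambda>t. sqrt (1 + t powr p) - t powr (p / 2)) has_integral
           sqrt pi / (2 * cos (pi / p)) * (Gamma (1 + 1 / p) / Gamma (3/2 + 1 / p))) {0..}"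
proof -
  define s where "s = 1 / p"
  have s: "0 < s" "s < 1/2"
    using assms by (simp_all add: s_def field_simps)
  define y where "y x = x / (2 * sqrt (1 - x))" for x :: real
  define y' where "y' x = (2 - x) / (4 * (1 - x) * sqrt (1 - x))" for x :: real
  define f where "f t = sqrt (1 + t powr p) - t powr (p / 2)" for t :: real
  define g where "g x = y x powr (2 * s)" for x
  define g' where "g' x = 2 * s * y x powr (2 * s - 1) * y' x" for x
  have y_pos: "y x > 0" if "0 < x" "x < 1" for x
    using that by (simp add: y_def)
  have fg: "f (g x) = sqrt (1 - x)" if "0 < x" "x < 1" for x
  proof -
    have "g x powr p = (y x)\<^sup>2" "g x powr (p / 2) = y x"
      using y_pos[OF that] assms by (simp_all add: g_def s_def powr_powr)
    then show ?thesis
      using sqrt_one_plus_power2_minus_eq[of x] that by (simp add: f_def y_def)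
  qed
  have "(f has_integral sqrt pi / (2 * cos (pi * s)) * (Gamma (1 + s) / Gamma (3/2 + s))) {0<..}"
  proof (rule has_integral_Ioi_substitution_nonneg[of 0 1 g g'])
    fix x :: real
    assume x: "0 < x" "x < 1"
    have "(y has_real_derivative y' x) (at x)"
      using has_real_derivative_sqrt_substitution[OF x(2)] by (simp add: y_def[abs_def] y'_def)
    from DERIV_chain2[OF has_real_derivative_powr[OF y_pos[OF x]] this]
    show "(g has_real_derivative g' x) (at x)"
      by (simp add: g_def[abs_def] g'_def)
    show "isCont f (g x)"
      using y_pos[OF x] by (auto simp: f_def[abs_def] g_def intro!: continuous_intros)
    show "isCont g' x"
      using y_pos[OF x] x by (auto simp: g'_def[abs_def] y_def[abs_def] y'_def[abs_def] intro!: continuous_intros)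
    show "0 \<le> f (g x)"
      using fg[OF x] x by simp
  next
    fix x :: real
    assume "0 \<le> x" "x \<le> 1"
    then show "0 \<le> g' x"
      using s by (simp add: g'_def y_def y'_def)
  next
    show "(g \<longlongrightarrow> 0) (at_right 0)" "filterlim g at_top (at_left 1)"
      unfolding g_def y_def using s by real_asymp+
  next
    have integrand_eq: "f (g x) * g' x = s * 2 powr (-2 * s) * (2 * (x powr (2 * s - 1) * (1 - x) powr (1/2 - s))
            + x powr (2 * s) * (1 - x) powr (- s - 1/2))" if "x \<in> {0<..<1}" for x
      using that fg sqrt_substitution_integrand_eq[of x s] by (simp add: g'_def y_def y'_def)
    show "((\<lambda>x. f (g x) * g' x) has_integral
                 sqrt pi / (2 * cos (pi * s)) * (Gamma (1 + s) / Gamma (3/2 + s))) {0<..<1}"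
      by (rule has_integral_cong[THEN iffD2, OF integrand_eq has_integral_Beta_combination[OF s]])
  qed simp
  then show ?thesis
    using has_integral_interior[of "{0..}" f] by (simp add: f_def[abs_def] s_def)
qed

theorem theoremA1:
  fixes m :: nat
  assumes "m \<ge> 3"
  shows "((\<lambda>t::real. sqrt (1 + t ^ m) - t powr (real m / 2)) has_integral
           (sqrt pi / (2 * cos (pi / real m)) *
            (Gamma (1 + 1 / real m) / Gamma (3 / 2 + 1 / real m)))) {0..}"
proof -
  have "sqrt (1 + t ^ m) - t powr (real m / 2) = sqrt (1 + t powr real m) - t powr (real m / 2)"
    if "t \<in> {0..}" for t :: real
    using that assms by (cases "t = 0") (simp_all add: powr_realpow)
  moreover have "real m > 2"
    using assms by simp
  ultimately show ?thesis
    by (rule has_integral_cong[THEN iffD2, OF _ has_integral_sqrt_one_plus_powr_minus_powr])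
qed

end
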